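(* Let $n\ge2$, $M$ a nonderogatory $d\times d$ matrix with minimal polynomial $\mathbf p$, and $\mathcal B$ a generic maximal subalgebra of $\mathcal T_{n,d}[\mathcal P(M)]$, with $\mathbf s_+,\mathbf s_-$ as defined below. Let $A\in\mathcal B$ and polynomials $\tilde{\mathbf a}_j$, each relatively prime to $\mathbf p$, satisfy $A_j=\mathbf s_+(M)\tilde{\mathbf a}_j(M)$ for $j\ge1$ and $A_j=\mathbf s_-(M)\tilde{\mathbf a}_j(M)$ for $j\le-1$; let $\boldsymbol\gamma_1\in\mathbb C[X]$ be such that $\mathbf p$ divides $\boldsymbol\gamma_1\tilde{\mathbf a}_{1-n}-1$, and put $\boldsymbol\xi=\tilde{\mathbf a}_1\boldsymbol\gamma_1$. Then $\mathcal B=\mathfrak B(\mathbf s_+,\mathbf s_-,\boldsymbol\xi)$.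
   Context: A nonderogatory matrix is one whose minimal polynomial equals its characteristic polynomial; $\mathcal P(M)$ is the algebra of polynomials in $M$; $\mathcal T_{n,d}[\mathcal P(M)]$ is the set of $n\times n$ block Toeplitz matrices $(B_{i-j})_{i,j=0}^{n-1}$ with all $B_m\in\mathcal P(M)$. A maximal subalgebra of $\mathcal T_{n,d}[\mathcal P(M)]$ is a subalgebra contained in it, maximal under inclusion; it is generic if it is contained neither in the set of such matrices with $B_i=0$ for all $i\ge1$ nor in the set with $B_i=0$ for all $i\le-1$. For $B\in\mathcal B$ write $B_j=\mathbf b_j(M)$; $\mathbf s_+$ is the greatest common divisor of $\mathbf p$ and all $\mathbf b_j$ with $j\ge1$, $B\in\mathcal B$, and $\mathbf s_-$ that of $\mathbf p$ and all $\mathbf b_j$ with $j\le-1$, $B\in\mathcal B$ (one has $\mathbf s_+\mathbf s_-\mid\mathbf p$, and such an $A$ exists). For $\mathbf p_+,\mathbf p_-,\boldsymbol\chi$ with $\mathbf p_+\mathbf p_-\mid\mathbf p$ and $\boldsymbol\chi$ coprime to $\mathbf p$, and $\mathbf q=\mathbf p/(\mathbf p_+\mathbf p_-)$, $\mathfrak B(\mathbf p_+,\mathbf p_-,\boldsymbol\chi)$ is the set of block Toeplitz matrices $A=(A_{i-j})$ with all $A_i\in\mathcal P(M)$ such that for each $i=1,\dots,n-1$ there are polynomials $\mathbf a_i,\mathbf a_{i-n}$ with $A_i=\mathbf p_+(M)\mathbf a_i(M)$, $A_{i-n}=\mathbf p_-(M)\mathbf a_{i-n}(M)$ and $\mathbf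 q\mid\mathbf a_i-\boldsymbol\chi\mathbf a_{i-n}$. *)

theory Defs
  imports "Jordan_Normal_Form.Char_Poly" "HOL-Computational_Algebra.Computational_Algebra" "HOL-Computational_Algebra.Field_as_Ring"
begin

definition poly_mat :: "complex poly \<Rightarrow> complex mat \<Rightarrow> complex mat" where
  "poly_mat q M = mat (dim_row M) (dim_col M)
     (\<lambda>(k,l). \<Sum>i\<le>degree q. coeff q i * (M ^\<^sub>m i) $$ (k,l))"

definition is_min_poly :: "complex mat \<Rightarrow> complex poly \<Rightarrow> bool" where
  "is_min_poly M p \<longleftrightarrow> monic p \<and> poly_mat p M = 0\<^sub>m (dim_row M) (dim_col M) \<and>
     (\<forall>q. poly_mat q M = 0\<^sub>m (dim_row M) (dim_col M) \<longrightarrow> p dvd q)"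

definition nonderogatory :: "complex mat \<Rightarrow> bool" where
  "nonderogatory M \<longleftrightarrow> (\<exists>p. is_min_poly M p \<and> p = char_poly M)"

definition polys_in :: "complex mat \<Rightarrow> complex mat set" where
  "polys_in M = {poly_mat q M | q. True}"

definition blk :: "nat \<Rightarrow> complex mat \<Rightarrow> nat \<Rightarrow> nat \<Rightarrow> complex mat" where
  "blk d A i j = mat d d (\<lambda>(k,l). A $$ (i*d+k, j*d+l))"

text \<open>The Toeplitz coefficient A_m (m in {1-n..n-1}) of a block Toeplitz matrix:
  A_m is the block in position (i,j) with i-j=m.\<close>
definition tcoef :: "nat \<Rightarrow> complex mat \<Rightarrow> int \<Rightarrow> complex mat" where
  "tcoef d A m = (if m \<ge> 0 then blk d A (nat m) 0 else blk d A 0 (nat (-m)))"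

definition block_toeplitz :: "nat \<Rightarrow> nat \<Rightarrow> complex mat \<Rightarrow> complex mat set" where
  "block_toeplitz n d M = {A. A \<in> carrier_mat (n*d) (n*d) \<and>
     (\<exists>B :: int \<Rightarrow> complex mat. (\<forall>m. 1 - int n \<le> m \<and> m \<le> int n - 1 \<longrightarrow> B m \<in> polys_in M) \<and>
        (\<forall>i<n. \<forall>j<n. \<forall>k<d. \<forall>l<d. A $$ (i*d+k, j*d+l) = B (int i - int j) $$ (k,l)))}"

definition subalgebra :: "nat \<Rightarrow> complex mat set \<Rightarrow> bool" where
  "subalgebra N S \<longleftrightarrow> S \<subseteq> carrier_mat N N \<and> 0\<^sub>m N N \<in> S \<and>
     (\<forall>A\<in>S. \<forall>B\<in>S. A + B \<in> S \<and> A * B \<in> S) \<and> (\<forall>c. \<forall>A\<in>S. c \<cdot>\<^sub>m A \<in> S)"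

definition maximal_subalgebra :: "nat \<Rightarrow> nat \<Rightarrow> complex mat \<Rightarrow> complex mat set \<Rightarrow> bool" where
  "maximal_subalgebra n d M S \<longleftrightarrow> subalgebra (n*d) S \<and> S \<subseteq> block_toeplitz n d M \<and>
     (\<forall>S'. subalgebra (n*d) S' \<and> S \<subseteq> S' \<and> S' \<subseteq> block_toeplitz n d M \<longrightarrow> S' = S)"

definition generic_maximal_subalgebra :: "nat \<Rightarrow> nat \<Rightarrow> complex mat \<Rightarrow> complex mat set \<Rightarrow> bool" where
  "generic_maximal_subalgebra n d M S \<longleftrightarrow> maximal_subalgebra n d M S \<and>
     \<not> S \<subseteq> {A \<in> block_toeplitz n d M. \<forall>i. 1 \<le> i \<and> i \<le> int n - 1 \<longrightarrow> tcoef d A i = 0\<^sub>m d d} \<and>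
     \<not> S \<subseteq> {A \<in> block_toeplitz n d M. \<forall>i. 1 - int n \<le> i \<and> i \<le> -1 \<longrightarrow> tcoef d A i = 0\<^sub>m d d}"

text \<open>s_+ and s_-: gcd of p and all b_j (B_j = b_j(M)) with j >= 1 resp. j <= -1, B in S.
  All representatives b_j are included; since they differ by multiples of p this is the same gcd.\<close>
definition s_plus :: "nat \<Rightarrow> nat \<Rightarrow> complex mat \<Rightarrow> complex poly \<Rightarrow> complex mat set \<Rightarrow> complex poly" where
  "s_plus n d M p S = Gcd (insert p {b. \<exists>B\<in>S. \<exists>j. 1 \<le> j \<and> j \<le> int n - 1 \<and> tcoef d B j = poly_mat b M})"

definition s_minus :: "nat \<Rightarrow> nat \<Rightarrow> complex mat \<Rightarrow> complex poly \<Rightarrow> complex mat set \<Rightarrow> complex poly" where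
  "s_minus n d M p S = Gcd (insert p {b. \<exists>B\<in>S. \<exists>j. 1 - int n \<le> j \<and> j \<le> -1 \<and> tcoef d B j = poly_mat b M})"

definition frakB :: "nat \<Rightarrow> nat \<Rightarrow> complex mat \<Rightarrow> complex poly \<Rightarrow> complex poly \<Rightarrow> complex poly \<Rightarrow> complex poly
    \<Rightarrow> complex mat set" where
  "frakB n d M p pp pm chi = {A \<in> block_toeplitz n d M.
     \<forall>i. 1 \<le> i \<and> i \<le> int n - 1 \<longrightarrow>
       (\<exists>ai aim. tcoef d A i = poly_mat pp M * poly_mat ai M \<and>
                 tcoef d A (i - int n) = poly_mat pm M * poly_mat aim M \<and>
                 (p div (pp * pm)) dvd (ai - chi * aim))}"

end

theory Submission
  imports Defs
begin

text \<open>
  An element of T_{n,d}[P(M)] is written as toeplitz c for a symbol c :: int => complex poly, the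
  m-th block diagonal being c m evaluated at M; symbols that agree modulo p give the same matrix.
  A product of two such matrices is again block Toeplitz iff p | a_i b_{-j} - a_{i-n} b_{n-j} for
  1 <= i, j <= n - 1, and its symbol is then read off the first block row and column. Among the
  symbols with s_+ | a_i and s_- | a_{i-n}, those of frakB(s_+, s_-, xi) are exactly the ones
  commuting with the matrix G of symbol s_+ xi at 1 and s_- at 1 - n; hence frakB is a subalgebra.

  Maximality of S is used twice. Adding to S all strictly lower block triangular Toeplitz
  matrices with coefficients divisible by p / s_- gives again a subalgebra of T, so these matrices
  lie in S already, which yields s_+ s_- | p. Then for B in S the product B A is block Toeplitz, and
  its Toeplitz condition at j = n - 1 together with p | gamma1 a_{1-n} - 1 places B in
  frakB(s_+, s_-, xi). So frakB is a subalgebra of T containing S, hence equal to S.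
\<close>

section \<open>Polynomials evaluated at a matrix\<close>

lemma pow_mat_Suc_left:
  assumes "A \<in> carrier_mat d d"
  shows "A ^\<^sub>m Suc k = A * A ^\<^sub>m k"
proof (induct k)
  case 0
  then show ?case using assms by simp
next
  case (Suc k)
  have "A ^\<^sub>m Suc (Suc k) = (A * A ^\<^sub>m k) * A" using Suc by simp
  also have "\<dots> = A * (A ^\<^sub>m k * A)" using assms by (simp add: assoc_mult_mat[of _ d d _ d _ d])
  finally show ?case by simp
qed

context
  fixes d :: nat and M :: "complex mat"
  assumes M_carrier: "M \<in> carrier_mat d d"
begin

lemma poly_mat_carrier [simp]: "poly_mat q M \<in> carrier_mat d d"
  and poly_mat_dim [simp]: "dim_row (poly_mat q M) = d" "dim_col (poly_mat q M) = d"
  using M_carrier unfolding poly_mat_def carrier_mat_def by simp_all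

lemma poly_mat_entry:
  assumes "degree q < N" "k < d" "l < d"
  shows "poly_mat q M $$ (k,l) = (\<Sum>i<N. coeff q i * (M ^\<^sub>m i) $$ (k,l))"
proof -
  have "poly_mat q M $$ (k,l) = (\<Sum>i\<le>degree q. coeff q i * (M ^\<^sub>m i) $$ (k,l))"
    using M_carrier assms unfolding poly_mat_def by auto
  also have "\<dots> = (\<Sum>i<N. coeff q i * (M ^\<^sub>m i) $$ (k,l))"
    by (rule sum.mono_neutral_left) (use assms in \<open>auto simp: coeff_eq_0\<close>)
  finally show ?thesis .
qed

lemma poly_mat_0: "poly_mat 0 M = 0\<^sub>m d d"
  by (rule eq_matI) (auto simp: poly_mat_entry[of 0 1])

lemma poly_mat_add: "poly_mat (f + g) M = poly_mat f M + poly_mat g M"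
proof (rule eq_matI)
  fix k l assume "k < dim_row (poly_mat f M + poly_mat g M)" "l < dim_col (poly_mat f M + poly_mat g M)"
  moreover obtain N where "degree f < N" "degree g < N" "degree (f + g) < N"
    using degree_add_le_max[of f g] by (intro that[of "Suc (max (degree f) (degree g))"]) auto
  ultimately show "poly_mat (f + g) M $$ (k, l) = (poly_mat f M + poly_mat g M) $$ (k, l)"
    by (simp add: poly_mat_entry[of _ N] sum.distrib[symmetric] distrib_right)
qed auto

lemma poly_mat_diff: "poly_mat (f - g) M = poly_mat f M - poly_mat g M"
proof (rule eq_matI)
  fix k l assume "k < dim_row (poly_mat f M - poly_mat g M)" "l < dim_col (poly_mat f M - poly_mat g M)"
  moreover obtain N where "degree f < N" "degree g < N" "degree (f - g) < N"
    using degree_diff_le_max[of f g] by (intro that[of "Suc (max (degree f) (degree g))"]) auto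
  ultimately show "poly_mat (f - g) M $$ (k, l) = (poly_mat f M - poly_mat g M) $$ (k, l)"
    by (simp add: poly_mat_entry[of _ N] sum_subtractf[symmetric] left_diff_distrib)
qed auto

lemma poly_mat_smult: "poly_mat (Polynomial.smult c f) M = c \<cdot>\<^sub>m poly_mat f M"
proof (rule eq_matI)
  fix k l assume "k < dim_row (c \<cdot>\<^sub>m poly_mat f M)" "l < dim_col (c \<cdot>\<^sub>m poly_mat f M)"
  moreover obtain N where "degree (Polynomial.smult c f) < N" "degree f < N"
    by (rule that[of "Suc (degree f)"]) auto
  ultimately show "poly_mat (Polynomial.smult c f) M $$ (k, l) = (c \<cdot>\<^sub>m poly_mat f M) $$ (k, l)"
    by (simp add: poly_mat_entry[of _ N] sum_distrib_left mult.assoc)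
qed auto

lemma poly_mat_pCons0: "poly_mat (pCons 0 f) M = M * poly_mat f M"
proof (rule eq_matI)
  fix k l assume "k < dim_row (M * poly_mat f M)" "l < dim_col (M * poly_mat f M)"
  then have kl: "k < d" "l < d" using M_carrier by auto
  obtain N where N: "degree f < N" "degree (pCons 0 f) < Suc N"
    using degree_pCons_le[of 0 f] by (intro that[of "Suc (degree f)"]) auto
  have "(M * poly_mat f M) $$ (k,l) = (\<Sum>r<d. M $$ (k,r) * poly_mat f M $$ (r,l))"
    using M_carrier kl by (simp add: scalar_prod_def atLeast0LessThan)
  also have "\<dots> = (\<Sum>r<d. \<Sum>i<N. M $$ (k,r) * (coeff f i * (M ^\<^sub>m i) $$ (r,l)))"
    using kl N by (intro sum.cong) (simp_all add: poly_mat_entry[of _ N] sum_distrib_left)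
  also have "\<dots> = (\<Sum>i<N. coeff f i * (\<Sum>r<d. M $$ (k,r) * (M ^\<^sub>m i) $$ (r,l)))"
    by (subst sum.swap) (simp add: sum_distrib_left mult_ac)
  also have "\<dots> = (\<Sum>i<N. coeff (pCons 0 f) (Suc i) * (M ^\<^sub>m Suc i) $$ (k,l))"
    using M_carrier kl
    by (simp add: pow_mat_Suc_left[OF M_carrier] scalar_prod_def atLeast0LessThan del: pow_mat.simps)
  also have "\<dots> = poly_mat (pCons 0 f) M $$ (k,l)"
    by (subst poly_mat_entry[OF N(2) kl])
      (simp add: sum.lessThan_Suc_shift del: pow_mat.simps sum.lessThan_Suc)
  finally show "poly_mat (pCons 0 f) M $$ (k,l) = (M * poly_mat f M) $$ (k,l)" ..
qed (use M_carrier in auto)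

lemma poly_mat_mult: "poly_mat (f * g) M = poly_mat f M * poly_mat g M"
proof (induct f rule: pCons_induct)
  case 0
  then show ?case by (simp add: poly_mat_0)
next
  case (pCons a f)
  have "poly_mat (pCons a f * g) M = poly_mat (Polynomial.smult a g + pCons 0 (f * g)) M"
    by simp
  also have "\<dots> = a \<cdot>\<^sub>m poly_mat g M + M * (poly_mat f M * poly_mat g M)"
    by (simp only: poly_mat_add poly_mat_smult poly_mat_pCons0 pCons.hyps)
  also have "\<dots> = (a \<cdot>\<^sub>m 1\<^sub>m d + M * poly_mat f M) * poly_mat g M"
    using M_carrier by (simp add: add_mult_distrib_mat[of _ d d _ _ d]
        mult_smult_assoc_mat[of _ d d _ d] assoc_mult_mat[of _ d d _ d _ d])
  also have "a \<cdot>\<^sub>m 1\<^sub>m d + M * poly_mat f M = poly_mat (pCons a f) M"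
  proof -
    have "poly_mat [:a:] M = a \<cdot>\<^sub>m 1\<^sub>m d"
      using M_carrier by (intro eq_matI) (auto simp: poly_mat_entry[of _ 1])
    moreover have "pCons a f = [:a:] + pCons 0 f" by simp
    ultimately show ?thesis by (simp only: poly_mat_add poly_mat_pCons0)
  qed
  finally show ?case .
qed

lemma poly_mat_sum_entry:
  "finite I \<Longrightarrow> k < d \<Longrightarrow> l < d \<Longrightarrow>
    poly_mat (\<Sum>t\<in>I. f t) M $$ (k,l) = (\<Sum>t\<in>I. poly_mat (f t) M $$ (k,l))"
  by (induct I rule: finite_induct) (auto simp: poly_mat_0 poly_mat_add)

end

lemma poly_mat_eq_iff_dvd:
  assumes M: "M \<in> carrier_mat d d" and "is_min_poly M p"
  shows "poly_mat f M = poly_mat g M \<longleftrightarrow> p dvd f - g"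
proof -
  have "poly_mat f M = poly_mat g M \<longleftrightarrow> poly_mat (f - g) M = 0\<^sub>m d d"
  proof
    assume "poly_mat (f - g) M = 0\<^sub>m d d"
    then have diff0: "poly_mat f M - poly_mat g M = 0\<^sub>m d d" using M by (simp add: poly_mat_diff)
    show "poly_mat f M = poly_mat g M"
    proof (rule eq_matI)
      fix i j assume "i < dim_row (poly_mat g M)" "j < dim_col (poly_mat g M)"
      then show "poly_mat f M $$ (i,j) = poly_mat g M $$ (i,j)"
        using arg_cong[OF diff0, of "\<lambda>X. X $$ (i,j)"] M by simp
    qed (use M in simp_all)
  qed (use M in \<open>simp add: poly_mat_diff minus_r_inv_mat[of _ d d]\<close>)
  also have "\<dots> \<longleftrightarrow> p dvd f - g"
  proof
    assume "poly_mat (f - g) M = 0\<^sub>m d d"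
    then show "p dvd f - g" using assms unfolding is_min_poly_def by auto
  next
    assume "p dvd f - g"
    then obtain h where "f - g = p * h" by (auto elim: dvdE)
    then show "poly_mat (f - g) M = 0\<^sub>m d d"
      using assms by (simp add: poly_mat_mult is_min_poly_def)
  qed
  finally show ?thesis .
qed

section \<open>Block Toeplitz matrices with polynomial symbols\<close>

lemma block_index_less:
  fixes i n k d :: nat
  shows "i < n \<Longrightarrow> k < d \<Longrightarrow> i * d + k < n * d"
proof -
  assume "i < n" "k < d"
  then have "i * d + k < Suc i * d" by simp
  also have "\<dots> \<le> n * d" using \<open>i < n\<close> by (intro mult_le_mono1) simp
  finally show ?thesis .
qed

lemma sum_lessThan_mult_blocks:
  fixes g :: "nat \<Rightarrow> 'a :: comm_monoid_add" and n d :: nat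
  shows "(\<Sum>r<n*d. g r) = (\<Sum>t<n. \<Sum>s<d. g (t*d+s))"
proof -
  have "sum g {x..<x+d} = (\<Sum>s<d. g (x+s))" for x
    by (induct d) (simp_all add: add.commute)
  then show ?thesis using sum.nat_group[of g d n] by simp
qed

type_synonym symbol = "int \<Rightarrow> complex poly"

locale poly_block_toeplitz =
  fixes n d :: nat and M :: "complex mat" and p :: "complex poly"
  assumes n_ge_2: "n \<ge> 2" and d_pos: "d \<ge> 1"
    and M_carrier: "M \<in> carrier_mat d d" and min_poly: "is_min_poly M p"
begin

abbreviation ev :: "complex poly \<Rightarrow> complex mat" where
  "ev q \<equiv> poly_mat q M"

abbreviation T :: "complex mat set" where
  "T \<equiv> block_toeplitz n d M"

lemmas ev_carrier = poly_mat_carrier[OF M_carrier] and ev_dim = poly_mat_dim[OF M_carrier]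
  and ev_0 = poly_mat_0[OF M_carrier] and ev_add = poly_mat_add[OF M_carrier]
  and ev_smult = poly_mat_smult[OF M_carrier] and ev_mult = poly_mat_mult[OF M_carrier]
  and ev_sum_entry = poly_mat_sum_entry[OF M_carrier]
  and ev_eq_iff_dvd = poly_mat_eq_iff_dvd[OF M_carrier min_poly]

declare ev_carrier [simp] ev_dim [simp]

lemma p_nonzero: "p \<noteq> 0"
  using min_poly unfolding is_min_poly_def by auto

lemma block_index_split:
  "r < n * d \<Longrightarrow> r = (r div d) * d + r mod d \<and> r div d < n \<and> r mod d < d"
  using d_pos by (auto simp: less_mult_imp_div_less)

lemma block_matrix_eqI:
  assumes "X \<in> carrier_mat (n*d) (n*d)" "Y \<in> carrier_mat (n*d) (n*d)"
    and "\<And>i j k l. i < n \<Longrightarrow> j < n \<Longrightarrow> k < d \<Longrightarrow> l < d \<Longrightarrow>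
      X $$ (i*d+k, j*d+l) = Y $$ (i*d+k, j*d+l)"
  shows "X = Y"
proof (rule eq_matI)
  fix r s assume "r < dim_row Y" "s < dim_col Y"
  then have "r < n*d" "s < n*d" using assms(2) by auto
  then show "X $$ (r, s) = Y $$ (r, s)"
    using assms(3)[of "r div d" "s div d" "r mod d" "s mod d"] block_index_split by metis
qed (use assms in auto)

definition toeplitz :: "symbol \<Rightarrow> complex mat" where
  "toeplitz c = mat (n*d) (n*d)
     (\<lambda>(r,s). ev (c (int (r div d) - int (s div d))) $$ (r mod d, s mod d))"

lemma toeplitz_carrier [simp]: "toeplitz c \<in> carrier_mat (n*d) (n*d)"
  and toeplitz_dim [simp]: "dim_row (toeplitz c) = n*d" "dim_col (toeplitz c) = n*d"
  unfolding toeplitz_def carrier_mat_def by simp_all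

lemma toeplitz_entry:
  "i < n \<Longrightarrow> j < n \<Longrightarrow> k < d \<Longrightarrow> l < d \<Longrightarrow>
    toeplitz c $$ (i*d+k, j*d+l) = ev (c (int i - int j)) $$ (k,l)"
  unfolding toeplitz_def using block_index_less[of i n k] block_index_less[of j n l] d_pos by simp

lemma blk_eqI:
  assumes "E \<in> carrier_mat d d" "\<And>k l. k < d \<Longrightarrow> l < d \<Longrightarrow> X $$ (i*d+k, j*d+l) = E $$ (k,l)"
  shows "blk d X i j = E"
  unfolding blk_def by (rule eq_matI) (use assms in auto)

lemma blk_toeplitz: "i < n \<Longrightarrow> j < n \<Longrightarrow> blk d (toeplitz c) i j = ev (c (int i - int j))"
  by (rule blk_eqI) (simp_all add: toeplitz_entry)

lemma tcoef_toeplitz: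
  assumes "1 - int n \<le> m" "m \<le> int n - 1"
  shows "tcoef d (toeplitz c) m = ev (c m)"
  using assms blk_toeplitz[of "nat m" 0 c] blk_toeplitz[of 0 "nat (-m)" c] n_ge_2
  unfolding tcoef_def by auto

lemma toeplitz_in_T: "toeplitz c \<in> T"
  unfolding block_toeplitz_def polys_in_def
  by (auto intro!: exI[of _ "\<lambda>m. ev (c m)"] simp: toeplitz_entry)

lemma T_obtain_toeplitz:
  assumes "X \<in> T"
  obtains c where "X = toeplitz c"
proof -
  from assms obtain B where X: "X \<in> carrier_mat (n*d) (n*d)"
    and B: "\<forall>m. 1 - int n \<le> m \<and> m \<le> int n - 1 \<longrightarrow> B m \<in> polys_in M"
    and X_entry: "\<forall>i<n. \<forall>j<n. \<forall>k<d. \<forall>l<d. X $$ (i*d+k, j*d+l) = B (int i - int j) $$ (k,l)"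
    unfolding block_toeplitz_def by blast
  have "\<forall>m. \<exists>q. 1 - int n \<le> m \<and> m \<le> int n - 1 \<longrightarrow> B m = ev q"
    using B unfolding polys_in_def by blast
  then obtain c where c: "\<And>m. 1 - int n \<le> m \<Longrightarrow> m \<le> int n - 1 \<Longrightarrow> B m = ev (c m)"
    by metis
  have "X = toeplitz c"
    by (rule block_matrix_eqI[OF X toeplitz_carrier]) (simp add: X_entry c toeplitz_entry)
  then show thesis by (rule that)
qed

lemma toeplitz_cong:
  assumes "\<And>m. 1 - int n \<le> m \<Longrightarrow> m \<le> int n - 1 \<Longrightarrow> p dvd a m - b m"
  shows "toeplitz a = toeplitz b"
proof (rule block_matrix_eqI)
  fix i j k l assume "i < n" "j < n" "k < d" "l < d"
  moreover have "ev (a (int i - int j)) = ev (b (int i - int j))"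
    unfolding ev_eq_iff_dvd using assms \<open>i < n\<close> \<open>j < n\<close> by simp
  ultimately show "toeplitz a $$ (i*d+k, j*d+l) = toeplitz b $$ (i*d+k, j*d+l)"
    by (simp add: toeplitz_entry)
qed simp_all

lemma toeplitz_add: "toeplitz a + toeplitz b = toeplitz (\<lambda>m. a m + b m)"
  by (rule block_matrix_eqI) (auto simp: toeplitz_entry ev_add block_index_less)

lemma toeplitz_smult: "x \<cdot>\<^sub>m toeplitz a = toeplitz (\<lambda>m. Polynomial.smult x (a m))"
  by (rule block_matrix_eqI) (auto simp: toeplitz_entry ev_smult block_index_less)

lemma toeplitz_zero: "toeplitz (\<lambda>m. 0) = 0\<^sub>m (n*d) (n*d)"
  by (rule block_matrix_eqI) (auto simp: toeplitz_entry ev_0 block_index_less)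

definition block_prod :: "symbol \<Rightarrow> symbol \<Rightarrow> nat \<Rightarrow> nat \<Rightarrow> complex poly" where
  "block_prod a b i j = (\<Sum>t<n. a (int i - int t) * b (int t - int j))"

lemma toeplitz_mult_entry:
  assumes "i < n" "j < n" "k < d" "l < d"
  shows "(toeplitz a * toeplitz b) $$ (i*d+k, j*d+l) = ev (block_prod a b i j) $$ (k,l)"
proof -
  have "(toeplitz a * toeplitz b) $$ (i*d+k, j*d+l)
      = (\<Sum>r<n*d. toeplitz a $$ (i*d+k, r) * toeplitz b $$ (r, j*d+l))"
    using assms block_index_less[of i n k] block_index_less[of j n l]
    by (simp add: scalar_prod_def atLeast0LessThan)
  also have "\<dots> = (\<Sum>t<n. \<Sum>s<d. toeplitz a $$ (i*d+k, t*d+s) * toeplitz b $$ (t*d+s, j*d+l))"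
    by (rule sum_lessThan_mult_blocks)
  also have "\<dots> = (\<Sum>t<n. \<Sum>s<d. ev (a (int i - int t)) $$ (k,s) * ev (b (int t - int j)) $$ (s,l))"
    using assms by (intro sum.cong refl) (simp add: toeplitz_entry)
  also have "\<dots> = (\<Sum>t<n. ev (a (int i - int t) * b (int t - int j)) $$ (k,l))"
    using assms by (intro sum.cong refl) (simp add: ev_mult scalar_prod_def atLeast0LessThan)
  also have "\<dots> = ev (block_prod a b i j) $$ (k,l)"
    unfolding block_prod_def using assms by (simp add: ev_sum_entry)
  finally show ?thesis .
qed

lemma toeplitz_mult_carrier [simp]: "toeplitz a * toeplitz b \<in> carrier_mat (n*d) (n*d)"
  by (simp add: mult_carrier_mat[of _ "n*d" "n*d" _ "n*d"])

lemma toeplitz_mult_assoc: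
  "toeplitz a * toeplitz b * toeplitz c = toeplitz a * (toeplitz b * toeplitz c)"
  by (rule assoc_mult_mat[of _ "n*d" "n*d" _ "n*d" _ "n*d"]) simp_all

lemma blk_toeplitz_mult:
  "i < n \<Longrightarrow> j < n \<Longrightarrow> blk d (toeplitz a * toeplitz b) i j = ev (block_prod a b i j)"
  by (rule blk_eqI) (simp_all add: toeplitz_mult_entry)

lemma block_prod_Suc_diff:
  assumes "Suc i < n" "Suc j < n"
  shows "block_prod a b (Suc i) (Suc j) - block_prod a b i j =
    a (int i + 1) * b (- (int j + 1)) - a (int i + 1 - int n) * b (int n - (int j + 1))"
proof -
  obtain n' where n': "n = Suc n'" using n_ge_2 by (cases n) auto
  have "block_prod a b (Suc i) (Suc j) = a (int i + 1) * b (- (int j + 1))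
      + (\<Sum>t<n'. a (int i - int t) * b (int t - int j))"
    unfolding block_prod_def unfolding n' by (subst sum.lessThan_Suc_shift) (simp add: algebra_simps)
  moreover have "block_prod a b i j = (\<Sum>t<n'. a (int i - int t) * b (int t - int j))
      + a (int i + 1 - int n) * b (int n - (int j + 1))"
    unfolding block_prod_def unfolding n' by (simp add: algebra_simps)
  ultimately show ?thesis by simp
qed

text \<open>By block_prod_Suc_diff this says that consecutive blocks along each diagonal of
  toeplitz a * toeplitz b agree, i.e. that the product is again block Toeplitz.\<close>
definition toeplitz_mult_cond :: "symbol \<Rightarrow> symbol \<Rightarrow> bool" where
  "toeplitz_mult_cond a b \<longleftrightarrow> (\<forall>i j. 1 \<le> i \<longrightarrow> i \<le> int n - 1 \<longrightarrow> 1 \<le> j \<longrightarrow> j \<le> int n - 1 \<longrightarrow>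
      p dvd a i * b (-j) - a (i - int n) * b (int n - j))"

lemma toeplitz_mult_condD:
  "toeplitz_mult_cond a b \<Longrightarrow> 1 \<le> i \<Longrightarrow> i \<le> int n - 1 \<Longrightarrow> 1 \<le> j \<Longrightarrow> j \<le> int n - 1 \<Longrightarrow>
    p dvd a i * b (-j) - a (i - int n) * b (int n - j)"
  unfolding toeplitz_mult_cond_def by blast

lemma toeplitz_mult_cond_if_in_T:
  assumes "toeplitz a * toeplitz b \<in> T"
  shows "toeplitz_mult_cond a b"
  unfolding toeplitz_mult_cond_def
proof (intro allI impI)
  fix i j :: int assume ij: "1 \<le> i" "i \<le> int n - 1" "1 \<le> j" "j \<le> int n - 1"
  obtain c where c: "toeplitz a * toeplitz b = toeplitz c"
    using assms by (rule T_obtain_toeplitz)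
  define i' j' where "i' = nat i - 1" and "j' = nat j - 1"
  have i': "i = int i' + 1" "Suc i' < n" and j': "j = int j' + 1" "Suc j' < n"
    using ij unfolding i'_def j'_def by auto
  have "ev (block_prod a b (Suc i') (Suc j')) = ev (block_prod a b i' j')"
    using i' j' by (simp add: blk_toeplitz_mult[symmetric] c blk_toeplitz)
  then have "p dvd block_prod a b (Suc i') (Suc j') - block_prod a b i' j'"
    by (simp add: ev_eq_iff_dvd)
  then show "p dvd a i * b (-j) - a (i - int n) * b (int n - j)"
    unfolding block_prod_Suc_diff[OF i'(2) j'(2)] using i' j' by (simp add: algebra_simps)
qed

definition mult_symbol :: "symbol \<Rightarrow> symbol \<Rightarrow> symbol" where
  "mult_symbol a b m = (if m \<ge> 0 then block_prod a b (nat m) 0 else block_prod a b 0 (nat (-m)))"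

lemma block_prod_cong_mult_symbol:
  assumes "toeplitz_mult_cond a b"
  shows "i < n \<Longrightarrow> j < n \<Longrightarrow> p dvd block_prod a b i j - mult_symbol a b (int i - int j)"
proof (induct i arbitrary: j)
  case 0
  then show ?case by (cases j) (auto simp: mult_symbol_def nat_add_distrib)
next
  case (Suc i)
  show ?case
  proof (cases j)
    case 0
    then show ?thesis by (simp add: mult_symbol_def nat_add_distrib)
  next
    case (Suc j')
    have lt: "Suc i < n" "Suc j' < n" using Suc.prems Suc by auto
    have "p dvd block_prod a b (Suc i) (Suc j') - block_prod a b i j'"
      unfolding block_prod_Suc_diff[OF lt] using lt by (intro toeplitz_mult_condD[OF assms]) auto
    moreover have "p dvd block_prod a b i j' - mult_symbol a b (int i - int j')"
      using Suc.hyps Suc.prems Suc by simp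
    ultimately show ?thesis using dvd_add Suc by (fastforce simp: algebra_simps)
  qed
qed

lemma toeplitz_mult:
  assumes "toeplitz_mult_cond a b"
  shows "toeplitz a * toeplitz b = toeplitz (mult_symbol a b)"
proof (rule block_matrix_eqI)
  fix i j k l assume ijkl: "i < n" "j < n" "k < d" "l < d"
  have "ev (block_prod a b i j) = ev (mult_symbol a b (int i - int j))"
    using block_prod_cong_mult_symbol[OF assms ijkl(1,2)] by (simp add: ev_eq_iff_dvd)
  then show "(toeplitz a * toeplitz b) $$ (i*d+k, j*d+l) = toeplitz (mult_symbol a b) $$ (i*d+k, j*d+l)"
    using ijkl by (simp add: toeplitz_mult_entry toeplitz_entry)
qed simp_all

definition corner_divisible :: "complex poly \<Rightarrow> complex poly \<Rightarrow> symbol \<Rightarrow> bool" where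
  "corner_divisible sp sm a \<longleftrightarrow>
     (\<forall>i. 1 \<le> i \<longrightarrow> i \<le> int n - 1 \<longrightarrow> sp dvd a i \<and> sm dvd a (i - int n))"

lemma corner_divisibleD:
  assumes "corner_divisible sp sm a" "1 \<le> i" "i \<le> int n - 1"
  shows "sp dvd a i" "sm dvd a (i - int n)"
  using assms unfolding corner_divisible_def by blast+

lemma corner_divisible_mult_symbol:
  assumes a: "corner_divisible sp sm a" and b: "corner_divisible sp sm b"
  shows "corner_divisible sp sm (mult_symbol a b)"
  unfolding corner_divisible_def
proof (intro allI impI conjI)
  fix i :: int assume i: "1 \<le> i" "i \<le> int n - 1"
  have "mult_symbol a b i = (\<Sum>t<n. a (i - int t) * b (int t))"
    using i unfolding mult_symbol_def block_prod_def by simp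
  also have "sp dvd \<dots>"
  proof (rule dvd_sum)
    fix t assume "t \<in> {..<n}"
    then show "sp dvd a (i - int t) * b (int t)"
      using corner_divisibleD(1)[OF a i] corner_divisibleD(1)[OF b, of t] by (cases "t = 0") auto
  qed
  finally show "sp dvd mult_symbol a b i" .
  have "mult_symbol a b (i - int n) = (\<Sum>t<n. a (- int t) * b (int t - int (nat (int n - i))))"
    using i unfolding mult_symbol_def block_prod_def by simp
  also have "sm dvd \<dots>"
  proof (rule dvd_sum)
    fix t assume "t \<in> {..<n}"
    then show "sm dvd a (- int t) * b (int t - int (nat (int n - i)))"
      using corner_divisibleD(2)[OF b i] corner_divisibleD(2)[OF a, of "int n - int t"] i
      by (cases "t = 0") auto
  qed
  finally show "sm dvd mult_symbol a b (i - int n)" .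
qed

end

section \<open>The algebra frakB\<close>

locale frakB_algebra = poly_block_toeplitz +
  fixes sp sm q xi :: "complex poly"
  assumes p_factor: "p = sp * sm * q"
begin

lemma q_eq: "p div (sp * sm) = q"
  using p_factor p_nonzero by auto

lemma dvd_cofactor_iff: "p dvd sp * sm * z \<longleftrightarrow> q dvd z"
  using p_factor p_nonzero by (simp add: mult.assoc)

definition frakB_symbol :: "symbol \<Rightarrow> bool" where
  "frakB_symbol a \<longleftrightarrow> (\<forall>i. 1 \<le> i \<longrightarrow> i \<le> int n - 1 \<longrightarrow>
     (\<exists>x y. a i = sp * x \<and> a (i - int n) = sm * y \<and> q dvd x - xi * y))"

lemma frakB_symbolE:
  assumes "frakB_symbol a" "1 \<le> i" "i \<le> int n - 1"
  obtains x y where "a i = sp * x" "a (i - int n) = sm * y" "q dvd x - xi * y"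
  using assms unfolding frakB_symbol_def by blast

lemma frakB_symbol_corner_divisible: "frakB_symbol a \<Longrightarrow> corner_divisible sp sm a"
  unfolding frakB_symbol_def corner_divisible_def by fastforce

definition generator :: symbol where
  "generator m = (if m = 1 then sp * xi else if m = 1 - int n then sm else 0)"

lemma block_prod_generator_right:
  assumes "i < n" "j < n"
  shows "block_prod a generator i j = (if Suc j < n then a (int i - int j - 1) * (sp * xi) else 0)
                    + (if j = n - 1 then a (int i) * sm else 0)"
proof -
  have "block_prod a generator i j = (\<Sum>t<n. (if t = Suc j then a (int i - int j - 1) * (sp * xi) else 0)
          + (if j = n - 1 then (if t = 0 then a (int i) * sm else 0) else 0))"
    unfolding block_prod_def
  proof (rule sum.cong[OF refl])
    fix t assume "t \<in> {..<n}"
    then have "int t - int j = 1 - int n \<longleftrightarrow> j = n - 1 \<and> t = 0" using assms by auto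
    moreover have "int t - int j = 1 \<longleftrightarrow> t = Suc j" by auto
    ultimately show "a (int i - int t) * generator (int t - int j)
        = (if t = Suc j then a (int i - int j - 1) * (sp * xi) else 0)
          + (if j = n - 1 then (if t = 0 then a (int i) * sm else 0) else 0)"
      unfolding generator_def using n_ge_2 by (auto simp: algebra_simps)
  qed
  also have "\<dots> = (if Suc j < n then a (int i - int j - 1) * (sp * xi) else 0)
                    + (if j = n - 1 then a (int i) * sm else 0)"
    using n_ge_2 by (simp add: sum.distrib)
  finally show ?thesis .
qed

lemma block_prod_generator_left:
  assumes "i < n" "j < n"
  shows "block_prod generator a i j = (if i \<ge> 1 then (sp * xi) * a (int i - 1 - int j) else 0)
                    + (if i = 0 then sm * a (int n - 1 - int j) else 0)"
proof -
  have "block_prod generator a i j =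
      (\<Sum>t<n. (if i \<ge> 1 then (if t = i - 1 then (sp * xi) * a (int i - 1 - int j) else 0) else 0)
          + (if i = 0 then (if t = n - 1 then sm * a (int n - 1 - int j) else 0) else 0))"
    unfolding block_prod_def
  proof (rule sum.cong[OF refl])
    fix t assume t: "t \<in> {..<n}"
    then have "int i - int t = 1 - int n \<longleftrightarrow> i = 0 \<and> t = n - 1" using assms by auto
    moreover have "int i - int t = 1 \<longleftrightarrow> i \<ge> 1 \<and> t = i - 1" by auto
    ultimately show "generator (int i - int t) * a (int t - int j)
        = (if i \<ge> 1 then (if t = i - 1 then (sp * xi) * a (int i - 1 - int j) else 0) else 0)
          + (if i = 0 then (if t = n - 1 then sm * a (int n - 1 - int j) else 0) else 0)"
      unfolding generator_def using n_ge_2 t by (auto simp: algebra_simps of_nat_diff)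
  qed
  also have "\<dots> = (if i \<ge> 1 then (sp * xi) * a (int i - 1 - int j) else 0)
                    + (if i = 0 then sm * a (int n - 1 - int j) else 0)"
    using n_ge_2 assms by (simp add: sum.distrib)
  finally show ?thesis .
qed

lemma block_prod_generator_commute:
  assumes "frakB_symbol a" "i < n" "j < n"
  shows "p dvd block_prod a generator i j - block_prod generator a i j"
proof (cases "i \<ge> 1")
  case i: True
  show ?thesis
  proof (cases "Suc j < n")
    case True
    then show ?thesis
      using i assms by (simp add: block_prod_generator_right block_prod_generator_left algebra_simps)
  next
    case False
    then have j: "j = n - 1" using assms by simp
    obtain x y where "a (int i) = sp * x" "a (int i - int n) = sm * y" and q: "q dvd x - xi * y"
      using frakB_symbolE[OF assms(1), of "int i"] i assms(2) by auto
    then have "block_prod a generator i j - block_prod generator a i j = sp * sm * (x - xi * y)"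
      using i j n_ge_2 assms
      by (simp add: block_prod_generator_right block_prod_generator_left algebra_simps of_nat_diff)
    then show ?thesis using q dvd_cofactor_iff by simp
  qed
next
  case False
  then have i: "i = 0" by simp
  show ?thesis
  proof (cases "Suc j < n")
    case True
    obtain x y where x: "a (int n - 1 - int j) = sp * x" and "a (int n - 1 - int j - int n) = sm * y"
      and q: "q dvd x - xi * y"
      using frakB_symbolE[OF assms(1), of "int n - 1 - int j"] True by auto
    moreover have "int n - 1 - int j - int n = - int j - 1" by simp
    ultimately have y: "a (- int j - 1) = sm * y" by metis
    have "block_prod a generator i j - block_prod generator a i j
        = a (- int j - 1) * (sp * xi) - sm * a (int n - 1 - int j)"
      using True i assms by (simp add: block_prod_generator_right block_prod_generator_left)
    also have "\<dots> = - (sp * sm * (x - xi * y))" unfolding x y by (simp add: algebra_simps)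
    finally show ?thesis using q dvd_cofactor_iff by simp
  next
    case False
    then have "j = n - 1" using assms by simp
    then show ?thesis using i n_ge_2
      by (simp add: block_prod_generator_right block_prod_generator_left algebra_simps of_nat_diff)
  qed
qed

lemma frakB_symbol_commutes:
  assumes "frakB_symbol a"
  shows "toeplitz a * toeplitz generator = toeplitz generator * toeplitz a"
proof (rule block_matrix_eqI)
  fix i j k l assume ijkl: "i < n" "j < n" "k < d" "l < d"
  have "ev (block_prod a generator i j) = ev (block_prod generator a i j)"
    using block_prod_generator_commute[OF assms ijkl(1,2)] by (simp add: ev_eq_iff_dvd)
  then show "(toeplitz a * toeplitz generator) $$ (i*d+k, j*d+l)
      = (toeplitz generator * toeplitz a) $$ (i*d+k, j*d+l)"
    using ijkl by (simp add: toeplitz_mult_entry)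
qed simp_all

lemma frakB_symbol_if_commutes:
  assumes a: "corner_divisible sp sm a"
    and comm: "toeplitz a * toeplitz generator = toeplitz generator * toeplitz a"
  shows "frakB_symbol a"
  unfolding frakB_symbol_def
proof (intro allI impI)
  fix i :: int assume i: "1 \<le> i" "i \<le> int n - 1"
  define i' where "i' = nat i"
  have i': "i = int i'" "i' < n" "i' \<ge> 1" and last: "n - 1 < n"
    using i n_ge_2 unfolding i'_def by auto
  obtain x where x: "a i = sp * x" using corner_divisibleD(1)[OF a i] by (auto elim: dvdE)
  obtain y where y: "a (i - int n) = sm * y" using corner_divisibleD(2)[OF a i] by (auto elim: dvdE)
  have "ev (block_prod a generator i' (n-1)) = ev (block_prod generator a i' (n-1))"
    using i' last by (simp add: blk_toeplitz_mult[symmetric] comm)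
  then have "p dvd block_prod a generator i' (n-1) - block_prod generator a i' (n-1)"
    by (simp add: ev_eq_iff_dvd)
  moreover have "block_prod a generator i' (n-1) - block_prod generator a i' (n-1)
      = sp * sm * (x - xi * y)"
    using i' last n_ge_2 x y
    by (simp add: block_prod_generator_right block_prod_generator_left algebra_simps of_nat_diff)
  ultimately have "q dvd x - xi * y" using dvd_cofactor_iff by simp
  then show "\<exists>x y. a i = sp * x \<and> a (i - int n) = sm * y \<and> q dvd x - xi * y"
    using x y by blast
qed

lemma frakB_symbol_zero: "frakB_symbol (\<lambda>m. 0)"
  unfolding frakB_symbol_def by (metis dvd_0_right mult_zero_right diff_self)

lemma frakB_symbol_add:
  assumes a: "frakB_symbol a" and b: "frakB_symbol b"
  shows "frakB_symbol (\<lambda>m. a m + b m)"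
  unfolding frakB_symbol_def
proof (intro allI impI)
  fix i :: int assume i: "1 \<le> i" "i \<le> int n - 1"
  obtain x y where xy: "a i = sp * x" "a (i - int n) = sm * y" "q dvd x - xi * y"
    using a i by (rule frakB_symbolE)
  obtain x' y' where xy': "b i = sp * x'" "b (i - int n) = sm * y'" "q dvd x' - xi * y'"
    using b i by (rule frakB_symbolE)
  have "q dvd (x + x') - xi * (y + y')"
    using dvd_add[OF xy(3) xy'(3)] by (simp add: algebra_simps)
  then show "\<exists>u v. a i + b i = sp * u \<and> a (i - int n) + b (i - int n) = sm * v \<and> q dvd u - xi * v"
    using xy xy' by (metis distrib_left)
qed

lemma frakB_symbol_smult:
  assumes a: "frakB_symbol a"
  shows "frakB_symbol (\<lambda>m. Polynomial.smult c (a m))"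
  unfolding frakB_symbol_def
proof (intro allI impI)
  fix i :: int assume i: "1 \<le> i" "i \<le> int n - 1"
  obtain x y where xy: "a i = sp * x" "a (i - int n) = sm * y" "q dvd x - xi * y"
    using a i by (rule frakB_symbolE)
  have "q dvd Polynomial.smult c x - xi * Polynomial.smult c y"
    using dvd_smult[OF xy(3), of c] by (simp add: smult_diff_right)
  moreover have "Polynomial.smult c (a i) = sp * Polynomial.smult c x"
    "Polynomial.smult c (a (i - int n)) = sm * Polynomial.smult c y"
    using xy by (simp_all add: mult_smult_right)
  ultimately show "\<exists>u v. Polynomial.smult c (a i) = sp * u \<and>
      Polynomial.smult c (a (i - int n)) = sm * v \<and> q dvd u - xi * v"
    by blast
qed

lemma frakB_symbol_mult_cond:
  assumes a: "frakB_symbol a" and b: "frakB_symbol b"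
  shows "toeplitz_mult_cond a b"
  unfolding toeplitz_mult_cond_def
proof (intro allI impI)
  fix i j :: int assume ij: "1 \<le> i" "i \<le> int n - 1" "1 \<le> j" "j \<le> int n - 1"
  obtain x y where xy: "a i = sp * x" "a (i - int n) = sm * y" "q dvd x - xi * y"
    using a ij(1,2) by (rule frakB_symbolE)
  obtain x' y' where xy': "b (int n - j) = sp * x'" "b (int n - j - int n) = sm * y'" "q dvd x' - xi * y'"
    using frakB_symbolE[OF b, of "int n - j"] ij(3,4) by auto
  have "q dvd (x - xi * y) * y' - y * (x' - xi * y')"
    using xy(3) xy'(3) by (simp add: dvd_diff)
  moreover have "a i * b (-j) - a (i - int n) * b (int n - j)
      = sp * sm * ((x - xi * y) * y' - y * (x' - xi * y'))"
    using xy xy' by (simp add: algebra_simps)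
  ultimately show "p dvd a i * b (-j) - a (i - int n) * b (int n - j)"
    by (simp add: dvd_cofactor_iff)
qed

lemma frakB_symbol_mult:
  assumes a: "frakB_symbol a" and b: "frakB_symbol b"
  shows "toeplitz a * toeplitz b = toeplitz (mult_symbol a b)" "frakB_symbol (mult_symbol a b)"
proof -
  let ?G = "toeplitz generator"
  show ab: "toeplitz a * toeplitz b = toeplitz (mult_symbol a b)"
    by (rule toeplitz_mult[OF frakB_symbol_mult_cond[OF a b]])
  have "toeplitz (mult_symbol a b) * ?G = toeplitz a * (toeplitz b * ?G)"
    unfolding ab[symmetric] by (rule toeplitz_mult_assoc)
  also have "\<dots> = toeplitz a * (?G * toeplitz b)" using frakB_symbol_commutes[OF b] by simp
  also have "\<dots> = (toeplitz a * ?G) * toeplitz b" by (rule toeplitz_mult_assoc[symmetric])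
  also have "\<dots> = ?G * toeplitz a * toeplitz b" using frakB_symbol_commutes[OF a] by simp
  also have "\<dots> = ?G * toeplitz (mult_symbol a b)"
    unfolding ab[symmetric] by (rule toeplitz_mult_assoc)
  finally show "frakB_symbol (mult_symbol a b)"
    using frakB_symbol_if_commutes corner_divisible_mult_symbol frakB_symbol_corner_divisible a b
    by blast
qed

lemma toeplitz_in_frakB:
  assumes c: "frakB_symbol c"
  shows "toeplitz c \<in> frakB n d M p sp sm xi"
  unfolding frakB_def q_eq
proof (intro CollectI conjI allI impI toeplitz_in_T)
  fix i :: int assume i: "1 \<le> i \<and> i \<le> int n - 1"
  obtain x y where xy: "c i = sp * x" "c (i - int n) = sm * y" "q dvd x - xi * y"
    using frakB_symbolE[OF c, of i] i by auto
  then show "\<exists>x y. tcoef d (toeplitz c) i = ev sp * ev x \<and>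
      tcoef d (toeplitz c) (i - int n) = ev sm * ev y \<and> q dvd x - xi * y"
    using i by (auto simp: tcoef_toeplitz ev_mult)
qed

lemma frakB_obtain_symbol:
  assumes X: "X \<in> frakB n d M p sp sm xi"
  obtains c where "X = toeplitz c" "frakB_symbol c"
proof -
  obtain c0 where c0: "X = toeplitz c0" using X unfolding frakB_def by (auto elim: T_obtain_toeplitz)
  have "\<forall>i. \<exists>x y. 1 \<le> i \<and> i \<le> int n - 1 \<longrightarrow> tcoef d X i = ev sp * ev x \<and>
      tcoef d X (i - int n) = ev sm * ev y \<and> q dvd x - xi * y"
    using X unfolding frakB_def q_eq by blast
  then obtain x y where xy: "\<And>i. 1 \<le> i \<Longrightarrow> i \<le> int n - 1 \<Longrightarrow> tcoef d X i = ev sp * ev (x i) \<and>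
      tcoef d X (i - int n) = ev sm * ev (y i) \<and> q dvd x i - xi * y i"
    by metis
  define c where "c m = (if 1 \<le> m \<and> m \<le> int n - 1 then sp * x m
     else if 1 - int n \<le> m \<and> m \<le> -1 then sm * y (m + int n) else c0 m)" for m
  have "toeplitz c0 = toeplitz c"
  proof (rule toeplitz_cong)
    fix m assume m: "1 - int n \<le> m" "m \<le> int n - 1"
    then have "ev (c0 m) = ev (c m)"
      using xy[of m] xy[of "m + int n"] tcoef_toeplitz[of m c0]
      unfolding c_def c0 by (auto simp: ev_mult)
    then show "p dvd c0 m - c m" by (simp add: ev_eq_iff_dvd)
  qed
  moreover have "frakB_symbol c"
    unfolding frakB_symbol_def c_def using xy by auto
  ultimately show thesis using c0 that by simp
qed

lemma frakB_eq: "frakB n d M p sp sm xi = toeplitz ` Collect frakB_symbol"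
  by (auto intro: toeplitz_in_frakB elim: frakB_obtain_symbol)

lemma subalgebra_frakB: "subalgebra (n*d) (frakB n d M p sp sm xi)"
  unfolding subalgebra_def frakB_eq
  using frakB_symbol_zero frakB_symbol_add frakB_symbol_smult frakB_symbol_mult
  by (auto simp: toeplitz_zero[symmetric] toeplitz_add toeplitz_smult)

text \<open>Only the Toeplitz condition of the product at j = n - 1 is used: it reads
  p | b_i a_{1-n} - b_{i-n} a_1, and multiplying by the inverse gamma of a_{1-n} modulo q yields
  the defining congruence of frakB.\<close>
lemma frakB_symbol_if_mult_in_T:
  assumes mult: "toeplitz b * toeplitz a \<in> T" and b: "corner_divisible sp sm b"
    and a_first: "p dvd a 1 - sp * u" and a_last: "p dvd a (1 - int n) - sm * v"
    and inverse: "p dvd \<gamma> * v - 1" and xi: "xi = u * \<gamma>"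
  shows "frakB_symbol b"
  unfolding frakB_symbol_def
proof (intro allI impI)
  fix i :: int assume i: "1 \<le> i" "i \<le> int n - 1"
  obtain x where x: "b i = sp * x" using corner_divisibleD(1)[OF b i] by (auto elim: dvdE)
  obtain y where y: "b (i - int n) = sm * y" using corner_divisibleD(2)[OF b i] by (auto elim: dvdE)
  have "p dvd b i * a (- (int n - 1)) - b (i - int n) * a (int n - (int n - 1))"
    using i n_ge_2 by (intro toeplitz_mult_condD[OF toeplitz_mult_cond_if_in_T[OF mult]]) auto
  then have corner: "p dvd b i * a (1 - int n) - b (i - int n) * a 1" by simp
  have "sp * sm * (x * v - y * u) = (b i * a (1 - int n) - b (i - int n) * a 1)
      - b i * (a (1 - int n) - sm * v) + b (i - int n) * (a 1 - sp * u)"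
    using x y by (simp add: algebra_simps)
  also have "p dvd \<dots>"
    using corner a_first a_last by (simp add: dvd_add dvd_diff)
  finally have "q dvd x * v - y * u" by (simp add: dvd_cofactor_iff)
  moreover have "q dvd \<gamma> * v - 1"
    using inverse p_factor dvd_trans by (metis dvd_triv_right)
  moreover have "x - xi * y = \<gamma> * (x * v - y * u) - x * (\<gamma> * v - 1)"
    using xi by (simp add: algebra_simps)
  ultimately have "q dvd x - xi * y" by (simp add: dvd_diff)
  then show "\<exists>x y. b i = sp * x \<and> b (i - int n) = sm * y \<and> q dvd x - xi * y"
    using x y by blast
qed

end

section \<open>Maximal subalgebras\<close>

lemma add_add_add_commute_mat:
  fixes A B C D :: "'a :: comm_monoid_add mat"
  assumes "A \<in> carrier_mat N N" "B \<in> carrier_mat N N" "C \<in> carrier_mat N N" "D \<in> carrier_mat N N"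
  shows "(A + C) + (B + D) = (A + B) + (C + D)"
  by (rule eq_matI) (use assms in \<open>auto simp: ac_simps\<close>)

lemma mult_add_add_mat:
  fixes A B C D :: "'a :: semiring_0 mat"
  assumes "A \<in> carrier_mat N N" "B \<in> carrier_mat N N" "C \<in> carrier_mat N N" "D \<in> carrier_mat N N"
  shows "(A + C) * (B + D) = A * B + ((A * D + C * B) + C * D)"
proof -
  have "(A + C) * (B + D) = (A * B + C * B) + (A * D + C * D)"
    using assms by (simp add: add_mult_distrib_mat[of _ N N] mult_add_distrib_mat[of _ N N])
  also have "\<dots> = A * B + ((A * D + C * B) + C * D)"
    by (rule eq_matI) (use assms in \<open>auto simp: ac_simps\<close>)
  finally show ?thesis .
qed

locale maximal_toeplitz_subalgebra = poly_block_toeplitz +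
  fixes S :: "complex mat set"
  assumes maximal: "maximal_subalgebra n d M S"
begin

abbreviation sP :: "complex poly" where "sP \<equiv> s_plus n d M p S"
abbreviation sM :: "complex poly" where "sM \<equiv> s_minus n d M p S"

lemma S_subalgebra: "subalgebra (n*d) S" and S_subset_T: "S \<subseteq> T"
  and S_maximal: "\<And>S'. subalgebra (n*d) S' \<Longrightarrow> S \<subseteq> S' \<Longrightarrow> S' \<subseteq> T \<Longrightarrow> S' = S"
  using maximal unfolding maximal_subalgebra_def by blast+

lemma S_carrier: "B \<in> S \<Longrightarrow> B \<in> carrier_mat (n*d) (n*d)"
  and S_zero: "0\<^sub>m (n*d) (n*d) \<in> S"
  and S_add: "A \<in> S \<Longrightarrow> B \<in> S \<Longrightarrow> A + B \<in> S"
  and S_mult: "A \<in> S \<Longrightarrow> B \<in> S \<Longrightarrow> A * B \<in> S"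
  and S_smult: "A \<in> S \<Longrightarrow> x \<cdot>\<^sub>m A \<in> S"
  using S_subalgebra unfolding subalgebra_def by blast+

lemma s_minus_dvd_p: "sM dvd p"
  unfolding s_minus_def by (rule Gcd_dvd) simp

lemma s_plus_dvd:
  "B \<in> S \<Longrightarrow> 1 \<le> j \<Longrightarrow> j \<le> int n - 1 \<Longrightarrow> tcoef d B j = ev b \<Longrightarrow> sP dvd b"
  unfolding s_plus_def by (rule Gcd_dvd) blast

lemma s_minus_dvd:
  "B \<in> S \<Longrightarrow> 1 - int n \<le> j \<Longrightarrow> j \<le> -1 \<Longrightarrow> tcoef d B j = ev b \<Longrightarrow> sM dvd b"
  unfolding s_minus_def by (rule Gcd_dvd) blast

lemma S_obtain_symbol:
  assumes "B \<in> S"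
  obtains b where "B = toeplitz b" "corner_divisible sP sM b"
proof -
  obtain b where b: "B = toeplitz b" using assms S_subset_T T_obtain_toeplitz by blast
  have "corner_divisible sP sM b"
    unfolding corner_divisible_def
  proof (intro allI impI conjI)
    fix i :: int assume i: "1 \<le> i" "i \<le> int n - 1"
    show "sP dvd b i"
      by (rule s_plus_dvd[OF assms i]) (use i in \<open>simp add: b tcoef_toeplitz\<close>)
    show "sM dvd b (i - int n)"
      by (rule s_minus_dvd[OF assms, of "i - int n"]) (use i in \<open>simp_all add: b tcoef_toeplitz\<close>)
  qed
  with b show thesis by (rule that)
qed

definition upper_divisible :: "symbol \<Rightarrow> bool" where
  "upper_divisible b \<longleftrightarrow> (\<forall>j. 1 \<le> j \<longrightarrow> j \<le> int n - 1 \<longrightarrow> sM dvd b (-j))"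

lemma upper_divisibleD: "upper_divisible b \<Longrightarrow> 1 \<le> j \<Longrightarrow> j \<le> int n - 1 \<Longrightarrow> sM dvd b (-j)"
  unfolding upper_divisible_def by blast

lemma upper_divisible_if_corner_divisible:
  assumes b: "corner_divisible sp sM b"
  shows "upper_divisible b"
  unfolding upper_divisible_def
proof (intro allI impI)
  fix j :: int assume "1 \<le> j" "j \<le> int n - 1"
  then have "sM dvd b ((int n - j) - int n)" by (intro corner_divisibleD(2)[OF b]) auto
  then show "sM dvd b (-j)" by simp
qed

text \<open>These are the matrices that can be added to S without leaving the algebra, so by maximality
  they already lie in S.\<close>
definition lower_symbol :: "symbol \<Rightarrow> bool" where
  "lower_symbol c \<longleftrightarrow> (\<forall>m. m \<le> 0 \<longrightarrow> c m = 0) \<and> (\<forall>m. p div sM dvd c m)"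

lemma lower_symbolD:
  assumes "lower_symbol c"
  shows "m \<le> 0 \<Longrightarrow> c m = 0" "p div sM dvd c m"
  using assms unfolding lower_symbol_def by simp_all

lemma lower_symbol_upper_divisible: "lower_symbol c \<Longrightarrow> upper_divisible c"
  unfolding lower_symbol_def upper_divisible_def by simp

lemma p_dvd_mult_cofactor:
  assumes "sM dvd x" "p div sM dvd y"
  shows "p dvd x * y"
proof -
  have "sM * (p div sM) dvd x * y" using assms by (rule mult_dvd_mono)
  then show ?thesis using s_minus_dvd_p by simp
qed

lemma toeplitz_eq_lower_symbol:
  assumes "\<And>m. p div sM dvd c m" "\<And>m. 1 - int n \<le> m \<Longrightarrow> m \<le> 0 \<Longrightarrow> p dvd c m"
  shows "\<exists>e. lower_symbol e \<and> toeplitz c = toeplitz e"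
proof (intro exI conjI)
  let ?e = "\<lambda>m. if m \<ge> 1 then c m else 0"
  show "lower_symbol ?e" unfolding lower_symbol_def using assms(1) by simp
  show "toeplitz c = toeplitz ?e" by (rule toeplitz_cong) (simp add: assms(2))
qed

lemma toeplitz_mult_lower_right:
  assumes b: "upper_divisible b" and c: "lower_symbol c"
  shows "\<exists>e. lower_symbol e \<and> toeplitz b * toeplitz c = toeplitz e"
proof -
  note c_zero = lower_symbolD(1)[OF c] and c_dvd = lower_symbolD(2)[OF c]
  have "toeplitz_mult_cond b c"
    unfolding toeplitz_mult_cond_def
  proof (intro allI impI)
    fix i j :: int assume ij: "1 \<le> i" "i \<le> int n - 1" "1 \<le> j" "j \<le> int n - 1"
    have "sM dvd b (- (int n - i))" using ij by (intro upper_divisibleD[OF b]) auto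
    then show "p dvd b i * c (-j) - b (i - int n) * c (int n - j)"
      using ij c_zero[of "-j"] p_dvd_mult_cofactor[OF _ c_dvd] by simp
  qed
  then have prod: "toeplitz b * toeplitz c = toeplitz (mult_symbol b c)" by (rule toeplitz_mult)
  have "p dvd mult_symbol b c m" if m: "m \<le> 0" for m
  proof -
    have "mult_symbol b c m = (\<Sum>t<n. b (- int t) * c (int t - int (nat (-m))))"
      using m unfolding mult_symbol_def block_prod_def by (cases "m = 0") auto
    also have "p dvd \<dots>"
    proof (rule dvd_sum)
      fix t assume t: "t \<in> {..<n}"
      show "p dvd b (- int t) * c (int t - int (nat (-m)))"
      proof (cases "int t - int (nat (-m)) \<le> 0")
        case False
        then have "sM dvd b (- int t)" using t m by (intro upper_divisibleD[OF b]) auto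
        then show ?thesis using p_dvd_mult_cofactor c_dvd by blast
      qed (simp add: c_zero)
    qed
    finally show ?thesis .
  qed
  moreover have "p div sM dvd mult_symbol b c m" for m
    unfolding mult_symbol_def block_prod_def using c_dvd by (auto intro!: dvd_sum)
  ultimately show ?thesis using toeplitz_eq_lower_symbol[of "mult_symbol b c"] prod by simp
qed

lemma toeplitz_mult_lower_left:
  assumes b: "upper_divisible b" and c: "lower_symbol c"
  shows "\<exists>e. lower_symbol e \<and> toeplitz c * toeplitz b = toeplitz e"
proof -
  note c_zero = lower_symbolD(1)[OF c] and c_dvd = lower_symbolD(2)[OF c]
  have "toeplitz_mult_cond c b"
    unfolding toeplitz_mult_cond_def
  proof (intro allI impI)
    fix i j :: int assume ij: "1 \<le> i" "i \<le> int n - 1" "1 \<le> j" "j \<le> int n - 1"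
    then show "p dvd c i * b (-j) - c (i - int n) * b (int n - j)"
      using c_zero[of "i - int n"] p_dvd_mult_cofactor[OF upper_divisibleD[OF b] c_dvd]
      by (simp add: mult.commute)
  qed
  then have prod: "toeplitz c * toeplitz b = toeplitz (mult_symbol c b)" by (rule toeplitz_mult)
  have "mult_symbol c b m = 0" if "m \<le> 0" for m
    using that unfolding mult_symbol_def block_prod_def by (simp add: c_zero)
  moreover have "p div sM dvd mult_symbol c b m" for m
    unfolding mult_symbol_def block_prod_def using c_dvd by (auto intro!: dvd_sum)
  ultimately show ?thesis using toeplitz_eq_lower_symbol[of "mult_symbol c b"] prod by simp
qed

definition lower_mats :: "complex mat set" where
  "lower_mats = toeplitz ` Collect lower_symbol"

lemma lower_mats_zero: "0\<^sub>m (n*d) (n*d) \<in> lower_mats"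
  unfolding lower_mats_def lower_symbol_def toeplitz_zero[symmetric] by auto

lemma lower_mats_add: "C \<in> lower_mats \<Longrightarrow> C' \<in> lower_mats \<Longrightarrow> C + C' \<in> lower_mats"
  unfolding lower_mats_def lower_symbol_def by (auto simp: toeplitz_add)

lemma lower_mats_smult: "C \<in> lower_mats \<Longrightarrow> x \<cdot>\<^sub>m C \<in> lower_mats"
  unfolding lower_mats_def lower_symbol_def by (auto simp: toeplitz_smult dvd_smult)

lemma lower_mats_mult_upper_divisible:
  assumes "upper_divisible b" "C \<in> lower_mats"
  shows "toeplitz b * C \<in> lower_mats" "C * toeplitz b \<in> lower_mats"
  using assms toeplitz_mult_lower_right toeplitz_mult_lower_left unfolding lower_mats_def by blast+

lemma lower_mats_mult_S:
  assumes "B \<in> S" "C \<in> lower_mats"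
  shows "B * C \<in> lower_mats" "C * B \<in> lower_mats"
proof -
  obtain b where "B = toeplitz b" "corner_divisible sP sM b" using assms(1) by (rule S_obtain_symbol)
  then show "B * C \<in> lower_mats" "C * B \<in> lower_mats"
    using lower_mats_mult_upper_divisible[OF upper_divisible_if_corner_divisible assms(2)] by simp_all
qed

lemma lower_mats_mult: "C \<in> lower_mats \<Longrightarrow> C' \<in> lower_mats \<Longrightarrow> C * C' \<in> lower_mats"
  using lower_mats_mult_upper_divisible lower_symbol_upper_divisible unfolding lower_mats_def
  by blast

definition S_extended :: "complex mat set" where
  "S_extended = {B + C | B C. B \<in> S \<and> C \<in> lower_mats}"

lemma subalgebra_S_extended: "subalgebra (n*d) S_extended"
  unfolding subalgebra_def
proof (intro conjI ballI allI)
  have lower_carrier: "C \<in> lower_mats \<Longrightarrow> C \<in> carrier_mat (n*d) (n*d)" for C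
    unfolding lower_mats_def by auto
  show "S_extended \<subseteq> carrier_mat (n*d) (n*d)"
    unfolding S_extended_def using S_carrier lower_carrier by auto
  show "0\<^sub>m (n*d) (n*d) \<in> S_extended"
    unfolding S_extended_def using S_zero lower_mats_zero by force
  fix X Y assume "X \<in> S_extended" "Y \<in> S_extended"
  then obtain B C B' C' where XY: "X = B + C" "Y = B' + C'" and S: "B \<in> S" "B' \<in> S"
    and L: "C \<in> lower_mats" "C' \<in> lower_mats"
    unfolding S_extended_def by blast
  have carrier: "B \<in> carrier_mat (n*d) (n*d)" "B' \<in> carrier_mat (n*d) (n*d)"
    "C \<in> carrier_mat (n*d) (n*d)" "C' \<in> carrier_mat (n*d) (n*d)"
    using S L S_carrier lower_carrier by auto
  have "X + Y = (B + B') + (C + C')" unfolding XY using carrier by (rule add_add_add_commute_mat)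
  then show "X + Y \<in> S_extended"
    unfolding S_extended_def using S_add[OF S] lower_mats_add[OF L] by blast
  have "X * Y = B * B' + ((B * C' + C * B') + C * C')"
    unfolding XY using carrier by (intro mult_add_add_mat)
  moreover have "(B * C' + C * B') + C * C' \<in> lower_mats"
    using lower_mats_mult_S(1)[OF S(1) L(2)] lower_mats_mult_S(2)[OF S(2) L(1)] lower_mats_mult[OF L]
    by (intro lower_mats_add)
  ultimately show "X * Y \<in> S_extended"
    unfolding S_extended_def using S_mult[OF S] by blast
next
  fix x :: complex and X assume "X \<in> S_extended"
  then obtain B C where X: "X = B + C" "B \<in> S" "C \<in> lower_mats"
    unfolding S_extended_def by blast
  have "x \<cdot>\<^sub>m X = x \<cdot>\<^sub>m B + x \<cdot>\<^sub>m C"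
    unfolding X(1) using S_carrier[OF X(2)] X(3) unfolding lower_mats_def
    by (auto intro: add_smult_distrib_left_mat)
  then show "x \<cdot>\<^sub>m X \<in> S_extended"
    unfolding S_extended_def using S_smult[OF X(2)] lower_mats_smult[OF X(3)] by blast
qed

lemma S_extended_eq: "S_extended = S"
proof (rule S_maximal[OF subalgebra_S_extended])
  show "S \<subseteq> S_extended"
  proof
    fix B assume "B \<in> S"
    then have "B = B + 0\<^sub>m (n*d) (n*d)" using S_carrier by simp
    then show "B \<in> S_extended" unfolding S_extended_def using \<open>B \<in> S\<close> lower_mats_zero by blast
  qed
  show "S_extended \<subseteq> T"
  proof
    fix X assume "X \<in> S_extended"
    then obtain B c where X: "X = B + toeplitz c" and "B \<in> S"
      unfolding S_extended_def lower_mats_def by blast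
    then obtain b where "B = toeplitz b" using S_subset_T T_obtain_toeplitz by blast
    then show "X \<in> T" unfolding X by (simp add: toeplitz_add toeplitz_in_T)
  qed
qed

lemma s_plus_times_s_minus_dvd_p: "sP * sM dvd p"
proof -
  define c :: symbol where "c m = (if m = 1 then p div sM else 0)" for m
  have "toeplitz c \<in> lower_mats" unfolding lower_mats_def lower_symbol_def c_def by auto
  moreover have "toeplitz c = 0\<^sub>m (n*d) (n*d) + toeplitz c" by simp
  ultimately have "toeplitz c \<in> S"
    using S_extended_eq S_zero unfolding S_extended_def by blast
  moreover have "tcoef d (toeplitz c) 1 = ev (p div sM)"
    using n_ge_2 by (simp add: tcoef_toeplitz c_def)
  ultimately have "sP dvd p div sM" using n_ge_2 by (intro s_plus_dvd) auto
  then have "sP * sM dvd p div sM * sM" by simp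
  then show ?thesis using s_minus_dvd_p by simp
qed

theorem S_eq_frakB:
  assumes A: "A \<in> S" and first: "tcoef d A 1 = ev sP * ev u"
    and last: "tcoef d A (1 - int n) = ev sM * ev v" and inverse: "p dvd \<gamma> * v - 1"
  shows "S = frakB n d M p sP sM (u * \<gamma>)"
proof -
  interpret frakB_algebra n d M p sP sM "p div (sP * sM)" "u * \<gamma>"
    using s_plus_times_s_minus_dvd_p by unfold_locales simp
  obtain a where a: "A = toeplitz a" using A S_subset_T T_obtain_toeplitz by blast
  have a_first: "p dvd a 1 - sP * u" and a_last: "p dvd a (1 - int n) - sM * v"
    using first last n_ge_2 by (simp_all add: a tcoef_toeplitz ev_mult ev_eq_iff_dvd[symmetric])
  have "S \<subseteq> frakB n d M p sP sM (u * \<gamma>)"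
  proof
    fix B assume B: "B \<in> S"
    then obtain b where b: "B = toeplitz b" "corner_divisible sP sM b" by (rule S_obtain_symbol)
    have "toeplitz b * toeplitz a \<in> T" using S_mult[OF B A] S_subset_T a b by auto
    then have "frakB_symbol b"
      using b(2) a_first a_last inverse by (rule frakB_symbol_if_mult_in_T) simp
    then show "B \<in> frakB n d M p sP sM (u * \<gamma>)" unfolding frakB_eq b by blast
  qed
  moreover have "frakB n d M p sP sM (u * \<gamma>) \<subseteq> T" unfolding frakB_def by blast
  ultimately show ?thesis using S_maximal[OF subalgebra_frakB] by blast
qed

end

theorem corollary7p4:
  fixes n d :: nat and M :: "complex mat" and p :: "complex poly" and S :: "complex mat set"
    and A :: "complex mat" and a_t :: "int \<Rightarrow> complex poly" and \<gamma>1 :: "complex poly"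
  assumes "n \<ge> 2" and "d \<ge> 1"
    and "M \<in> carrier_mat d d" and "nonderogatory M" and "is_min_poly M p"
    and "generic_maximal_subalgebra n d M S"
    and "A \<in> S"
    and "\<forall>j. 1 - int n \<le> j \<and> j \<le> int n - 1 \<and> j \<noteq> 0 \<longrightarrow> coprime (a_t j) p"
    and "\<forall>j. 1 \<le> j \<and> j \<le> int n - 1 \<longrightarrow>
           tcoef d A j = poly_mat (s_plus n d M p S) M * poly_mat (a_t j) M"
    and "\<forall>j. 1 - int n \<le> j \<and> j \<le> -1 \<longrightarrow>
           tcoef d A j = poly_mat (s_minus n d M p S) M * poly_mat (a_t j) M"
    and "p dvd \<gamma>1 * a_t (1 - int n) - 1"
  shows "S = frakB n d M p (s_plus n d M p S) (s_minus n d M p S) (a_t 1 * \<gamma>1)"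
proof -
  interpret maximal_toeplitz_subalgebra n d M p S
    using assms(1-3,5,6) by unfold_locales (auto simp: generic_maximal_subalgebra_def)
  show ?thesis
    using assms(1,7,9,10,11) by (intro S_eq_frakB) auto
qed

end
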